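(* For every $n\ge 10$ there exist two graphs $G_n,H_n$, each on $2n$ vertices, and a graph $F$ such that, with $\mathcal{F}=\{F\}$, for every number of rounds $T>0$, $$\big\|\overline{\phi^{(T)}_{\mathsf{WL},\mathcal{F}}}(G_n)-\overline{\phi^{(T)}_{\mathsf{WL},\mathcal{F}}}(H_n)\big\|<\big\|\overline{\phi^{(T)}_{\mathsf{WL}}}(G_n)-\overline{\phi^{(T)}_{\mathsf{WL}}}(H_n)\big\|.$$
   Context: Graphs are finite, simple, undirected, unlabeled. $1$-WL: $C^1_0$ constant, $C^1_t(v)=\mathsf{RELABEL}(C^1_{t-1}(v),\{\!\{C^1_{t-1}(u):u\in N(v)\}\!\})$ with a fixed injective $\mathsf{RELABEL}$ shared by all graphs. $1$-WL$_{\mathcal{F}}$: same update with initial colour $(\ell_F(v))_{F\in\mathcal{F}}$, $\ell_F(v)=1$ if $v$ lies in some vertex set $X$ with induced subgraph $G[X]$ isomorphic to $F$, else $0$. $\phi_t(G)$ (resp. $\phi_{\mathcal{F},t}(G)$) counts the vertices of $G$ of each colour occurring at round $t$ in the graphs considered; $\phi^{(T)}_{\mathsf{WL}}(G)$, $\phi^{(T)}_{\mathsf{WL},\mathcal{F}}(G)$ are concatenations over rounds $0,\dots,T$; the bar denotes normalisation to unit Euclidean norm; $\|\cdot\|$ is the Euclidean norm. *)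

theory Defs
  imports Complex_Main "HOL-Library.Multiset"
begin

type_synonym graph = "nat set \<times> (nat \<Rightarrow> nat \<Rightarrow> bool)"

definition verts :: "graph \<Rightarrow> nat set" where "verts G = fst G"
definition adj :: "graph \<Rightarrow> nat \<Rightarrow> nat \<Rightarrow> bool" where "adj G = snd G"

definition simple_graph :: "graph \<Rightarrow> bool" where
  "simple_graph G \<longleftrightarrow> finite (verts G)
     \<and> (\<forall>u v. adj G u v \<longrightarrow> u \<in> verts G \<and> v \<in> verts G)
     \<and> (\<forall>u v. adj G u v \<longleftrightarrow> adj G v u)
     \<and> (\<forall>v. \<not> adj G v v)"

definition nbrs :: "graph \<Rightarrow> nat \<Rightarrow> nat set" where
  "nbrs G v = {u \<in> verts G. adj G v u}"

definition induced_iso :: "graph \<Rightarrow> nat set \<Rightarrow> graph \<Rightarrow> bool" where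
  "induced_iso G X F \<longleftrightarrow> (\<exists>f. bij_betw f X (verts F)
      \<and> (\<forall>u\<in>X. \<forall>w\<in>X. adj G u w \<longleftrightarrow> adj F (f u) (f w)))"

definition ell :: "graph \<Rightarrow> graph \<Rightarrow> nat \<Rightarrow> bool" where
  "ell F G v \<longleftrightarrow> (\<exists>X. X \<subseteq> verts G \<and> v \<in> X \<and> induced_iso G X F)"

text \<open>Colours: the injective RELABEL is realised structurally: a colour at round
t+1 is literally the pair (old colour, multiset of neighbour colours).\<close>
datatype 'b col = Init 'b | Ref "'b col" "'b col multiset"

primrec wl :: "(graph \<Rightarrow> nat \<Rightarrow> 'b) \<Rightarrow> graph \<Rightarrow> nat \<Rightarrow> nat \<Rightarrow> 'b col" where
  "wl init G 0 v = Init (init G v)"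
| "wl init G (Suc t) v =
     Ref (wl init G t v) (image_mset (wl init G t) (mset_set (nbrs G v)))"

definition init_plain :: "graph \<Rightarrow> nat \<Rightarrow> bool list" where
  "init_plain G v = []"

definition init_F :: "graph list \<Rightarrow> graph \<Rightarrow> nat \<Rightarrow> bool list" where
  "init_F Fs G v = map (\<lambda>F. ell F G v) Fs"

definition cnt :: "(graph \<Rightarrow> nat \<Rightarrow> 'b) \<Rightarrow> graph \<Rightarrow> nat \<Rightarrow> 'b col \<Rightarrow> nat" where
  "cnt init G t c = card {v \<in> verts G. wl init G t v = c}"

definition colours :: "(graph \<Rightarrow> nat \<Rightarrow> 'b) \<Rightarrow> graph \<Rightarrow> graph \<Rightarrow> nat \<Rightarrow> 'b col set" where
  "colours init G H t = wl init G t ` verts G \<union> wl init H t ` verts H"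

text \<open>Euclidean norm of the concatenated feature vector phi^(T)(K) (K \<in> {G,H}),
indexed by pairs (t,c) with t \<le> T and c a colour occurring at round t.\<close>
definition phi_norm :: "(graph \<Rightarrow> nat \<Rightarrow> 'b) \<Rightarrow> graph \<Rightarrow> graph \<Rightarrow> nat \<Rightarrow> graph \<Rightarrow> real" where
  "phi_norm init G H T K =
     sqrt (\<Sum>t\<in>{..T}. \<Sum>c\<in>colours init G H t. (real (cnt init K t c))\<^sup>2)"

definition wl_dist :: "(graph \<Rightarrow> nat \<Rightarrow> 'b) \<Rightarrow> graph \<Rightarrow> graph \<Rightarrow> nat \<Rightarrow> real" where
  "wl_dist init G H T =
     sqrt (\<Sum>t\<in>{..T}. \<Sum>c\<in>colours init G H t.
        (real (cnt init G t c) / phi_norm init G H T G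
         - real (cnt init H t c) / phi_norm init G H T H)\<^sup>2)"

end

theory Submission
  imports Defs
begin

(* Take G edgeless on N = 2n vertices, H the disjoint union of a path 1-0-2, an edge 3-4 and
   N - 5 isolated vertices, and F the path on three vertices.  Both refinements keep G in a
   single colour class, so |phi(G)|^2 = (T + 1) N^2 in both cases and the distance of the
   normalised vectors is sqrt (2 - 2 cos), cos being the cosine between phi(G) and phi(H).
   From some round on both refinements split H into classes of sizes 1, 2, 2, N - 5; they
   differ only at the start.  Plain 1-WL sees nothing in round 0 and only degrees in round 1,
   where the four degree-one vertices of H form one class; the F-indicator separates the path
   from round 0 on.  That merged class inflates |phi(H)| enough to outweigh the perfect
   agreement of plain 1-WL in round 0, so the cosine is larger with F.  Clearing denominators,
   this is a polynomial inequality in N and T whose coefficients at N = 11 + x, T = 1 + y are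
   all positive. *)

definition feature_sum ::
    "(graph \<Rightarrow> nat \<Rightarrow> 'b) \<Rightarrow> graph \<Rightarrow> graph \<Rightarrow> nat \<Rightarrow> (real \<Rightarrow> real \<Rightarrow> real) \<Rightarrow> real" where
  "feature_sum init G H T f =
     (\<Sum>t\<in>{..T}. \<Sum>c\<in>colours init G H t. f (real (cnt init G t c)) (real (cnt init H t c)))"

lemma wl_dist_eq_cosine:
  fixes init :: "graph \<Rightarrow> nat \<Rightarrow> 'b" and G H :: graph and T :: nat
  defines "S f \<equiv> feature_sum init G H T f"
  assumes "S (\<lambda>x y. x\<^sup>2) > 0" "S (\<lambda>x y. y\<^sup>2) > 0"
  shows "wl_dist init G H T =
    sqrt (2 - 2 * S (\<lambda>x y. x * y) / sqrt (S (\<lambda>x y. x\<^sup>2) * S (\<lambda>x y. y\<^sup>2)))"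
proof -
  define p where "p = sqrt (S (\<lambda>x y. x\<^sup>2))"
  define q where "q = sqrt (S (\<lambda>x y. y\<^sup>2))"
  have pq: "p > 0" "q > 0" "p\<^sup>2 = S (\<lambda>x y. x\<^sup>2)" "q\<^sup>2 = S (\<lambda>x y. y\<^sup>2)"
    using assms(2,3) by (simp_all add: p_def q_def)
  have "(x / p - y / q)\<^sup>2 = x\<^sup>2 / p\<^sup>2 + y\<^sup>2 / q\<^sup>2 - 2 * (x * y) / (p * q)" for x y :: real
    by (simp add: power2_diff power_divide)
  then have "S (\<lambda>x y. (x / p - y / q)\<^sup>2) =
      S (\<lambda>x y. x\<^sup>2) / p\<^sup>2 + S (\<lambda>x y. y\<^sup>2) / q\<^sup>2 - 2 * S (\<lambda>x y. x * y) / (p * q)"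
    by (simp add: S_def feature_sum_def sum_divide_distrib sum_distrib_left sum.distrib
        sum_subtractf)
  also have "\<dots> = 2 - 2 * S (\<lambda>x y. x * y) / sqrt (S (\<lambda>x y. x\<^sup>2) * S (\<lambda>x y. y\<^sup>2))"
    using pq by (simp add: p_def q_def real_sqrt_mult)
  finally show ?thesis
    by (simp add: wl_dist_def phi_norm_def S_def feature_sum_def p_def q_def)
qed

lemma divide_sqrt_less_divide_sqrt:
  fixes a b p q :: real
  assumes "0 \<le> a" "0 \<le> b" "0 < p" "0 < q" "a\<^sup>2 * q < b\<^sup>2 * p"
  shows "a / sqrt p < b / sqrt q"
proof -
  have "sqrt (a\<^sup>2 * q) < sqrt (b\<^sup>2 * p)"
    using assms(5) by simp
  then have "a * sqrt q < b * sqrt p"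
    using assms(1,2) by (simp add: real_sqrt_mult)
  then show ?thesis
    using assms(3,4) by (simp add: divide_simps)
qed

definition round_profile ::
    "(graph \<Rightarrow> nat \<Rightarrow> 'b) \<Rightarrow> graph \<Rightarrow> graph \<Rightarrow> nat \<Rightarrow> (nat \<times> nat) multiset" where
  "round_profile init G H t =
     image_mset (\<lambda>c. (cnt init G t c, cnt init H t c)) (mset_set (colours init G H t))"

lemma sum_colours_eq_sum_round_profile:
  "(\<Sum>c\<in>colours init G H t. f (cnt init G t c) (cnt init H t c)) =
    (\<Sum>(x, y)\<in>#round_profile init G H t. f x y)"
  by (simp add: round_profile_def sum_unfold_sum_mset image_mset.compositionality comp_def)

lemma sum_atMost_if_zero:
  fixes A B :: real
  shows "(\<Sum>t\<le>T. if t = 0 then A else B) = A + real T * B"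
  by (induction T) (simp_all add: algebra_simps)

lemma sum_atMost_if_zero_one:
  fixes A B C :: real
  assumes "T \<ge> 1"
  shows "(\<Sum>t\<le>T. if t = 0 then A else if t = 1 then B else C) = A + B + (real T - 1) * C"
proof -
  obtain m where T: "T = Suc m"
    using assms by (cases T) auto
  have "(\<Sum>t\<le>Suc m. if t = 0 then A else if t = 1 then B else C) =
      A + (\<Sum>t\<le>m. if t = 0 then B else C)"
    by (subst sum.atMost_Suc_shift) simp
  then show ?thesis
    by (simp add: T sum_atMost_if_zero)
qed

lemma induced_iso_edge:
  assumes "induced_iso G X F" "a \<in> verts F" "b \<in> verts F" "adj F a b"
  obtains u w where "u \<in> X" "w \<in> X" "adj G u w"
proof -
  obtain f where f: "bij_betw f X (verts F)" "\<forall>u\<in>X. \<forall>w\<in>X. adj G u w \<longleftrightarrow> adj F (f u) (f w)"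
    using assms(1) by (auto simp: induced_iso_def)
  have "a \<in> f ` X" "b \<in> f ` X"
    using f(1) assms(2,3) by (simp_all add: bij_betw_def)
  then obtain u w where "u \<in> X" "w \<in> X" "f u = a" "f w = b"
    by blast
  with f(2) assms(4) show thesis
    using that[of u w] by blast
qed

definition path3_adj :: "nat \<Rightarrow> nat \<Rightarrow> bool" where
  "path3_adj u v \<longleftrightarrow> (u = 0 \<and> v \<in> {1, 2}) \<or> (v = 0 \<and> u \<in> {1, 2})"

definition path3 :: graph where
  "path3 = ({0, 1, 2}, path3_adj)"

definition edgeless :: "nat \<Rightarrow> graph" where
  "edgeless N = ({..<N}, \<lambda>u v. False)"

definition path3_plus_edge :: "nat \<Rightarrow> graph" where
  "path3_plus_edge N = ({..<N}, \<lambda>u v. path3_adj u v \<or> (u = 3 \<and> v = 4) \<or> (u = 4 \<and> v = 3))"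

lemma simple_graph_path3: "simple_graph path3"
  by (auto simp: simple_graph_def path3_def verts_def adj_def path3_adj_def)

lemma simple_graph_edgeless: "simple_graph (edgeless N)"
  by (simp add: simple_graph_def edgeless_def verts_def adj_def)

lemma simple_graph_path3_plus_edge: "N \<ge> 5 \<Longrightarrow> simple_graph (path3_plus_edge N)"
  by (auto simp: simple_graph_def path3_plus_edge_def verts_def adj_def path3_adj_def)

lemma not_ell_edgeless:
  "adj F a b \<Longrightarrow> a \<in> verts F \<Longrightarrow> b \<in> verts F \<Longrightarrow> \<not> ell F (edgeless N) v"
  by (auto simp: ell_def edgeless_def adj_def elim: induced_iso_edge)

lemma induced_path3_in_path3_plus_edge:
  assumes "induced_iso (path3_plus_edge N) X path3"
  shows "X = {0, 1, 2}"
proof -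
  obtain f where f: "bij_betw f X {0, 1, 2}"
    and adj_f: "\<forall>u\<in>X. \<forall>w\<in>X. adj (path3_plus_edge N) u w \<longleftrightarrow> path3_adj (f u) (f w)"
    using assms by (auto simp: induced_iso_def path3_def verts_def adj_def)
  have "{0, 1, 2} \<subseteq> f ` X"
    using f by (simp add: bij_betw_def)
  then obtain z p q where zpq: "z \<in> X" "p \<in> X" "q \<in> X" "f z = 0" "f p = 1" "f q = 2"
    by (metis imageE insert_subset)
  then have "adj (path3_plus_edge N) z p" "adj (path3_plus_edge N) z q" "p \<noteq> q"
    using adj_f by (auto simp: path3_adj_def)
  then have sub: "{0, 1, 2} \<subseteq> X"
    using zpq by (auto simp: path3_plus_edge_def adj_def path3_adj_def)
  have card: "card X = 3"
    using bij_betw_same_card[OF f] by simp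
  then have "finite X"
    using card.infinite by fastforce
  with sub card show ?thesis
    using card_subset_eq[of X "{0, 1, 2}"] by simp
qed

lemma ell_path3_path3_plus_edge:
  assumes "N \<ge> 5"
  shows "ell path3 (path3_plus_edge N) v \<longleftrightarrow> v \<in> {0, 1, 2}"
proof
  assume "ell path3 (path3_plus_edge N) v"
  then show "v \<in> {0, 1, 2}"
    by (auto simp: ell_def dest: induced_path3_in_path3_plus_edge)
next
  assume v: "v \<in> {0, 1, 2}"
  have "induced_iso (path3_plus_edge N) {0, 1, 2} path3"
    unfolding induced_iso_def
    by (rule exI[of _ id]) (auto simp: path3_def path3_plus_edge_def verts_def adj_def path3_adj_def)
  moreover have "{0, 1, 2} \<subseteq> verts (path3_plus_edge N)"
    using assms by (auto simp: path3_plus_edge_def verts_def)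
  ultimately show "ell path3 (path3_plus_edge N) v"
    using v unfolding ell_def by blast
qed

primrec isolated_colour :: "'b \<Rightarrow> nat \<Rightarrow> 'b col" where
  "isolated_colour d 0 = Init d"
| "isolated_colour d (Suc t) = Ref (isolated_colour d t) {#}"

primrec edge_colour :: "'b \<Rightarrow> nat \<Rightarrow> 'b col" where
  "edge_colour c 0 = Init c"
| "edge_colour c (Suc t) = Ref (edge_colour c t) {#edge_colour c t#}"

fun centre_colour :: "'b \<Rightarrow> 'b \<Rightarrow> nat \<Rightarrow> 'b col"
  and leaf_colour :: "'b \<Rightarrow> 'b \<Rightarrow> nat \<Rightarrow> 'b col" where
  "centre_colour a b 0 = Init a"
| "centre_colour a b (Suc t) = Ref (centre_colour a b t) {#leaf_colour a b t, leaf_colour a b t#}"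
| "leaf_colour a b 0 = Init b"
| "leaf_colour a b (Suc t) = Ref (leaf_colour a b t) {#centre_colour a b t#}"

definition path3_plus_edge_labelling :: "'b \<Rightarrow> 'b \<Rightarrow> 'b \<Rightarrow> 'b \<Rightarrow> nat \<Rightarrow> 'b" where
  "path3_plus_edge_labelling a b c d v =
     (if v = 0 then a else if v \<in> {1, 2} then b else if v \<in> {3, 4} then c else d)"

definition path3_plus_edge_colour :: "'b \<Rightarrow> 'b \<Rightarrow> 'b \<Rightarrow> 'b \<Rightarrow> nat \<Rightarrow> nat \<Rightarrow> 'b col" where
  "path3_plus_edge_colour a b c d t v =
     (if v = 0 then centre_colour a b t else if v \<in> {1, 2} then leaf_colour a b t
      else if v \<in> {3, 4} then edge_colour c t else isolated_colour d t)"

lemma wl_edgeless: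
  "init (edgeless N) = (\<lambda>_. d) \<Longrightarrow> wl init (edgeless N) t v = isolated_colour d t"
  by (induction t arbitrary: v) (simp_all add: nbrs_def edgeless_def adj_def)

lemma nbrs_path3_plus_edge:
  "N \<ge> 5 \<Longrightarrow> nbrs (path3_plus_edge N) v =
     (if v = 0 then {1, 2} else if v \<in> {1, 2} then {0}
      else if v = 3 then {4} else if v = 4 then {3} else {})"
  by (auto simp: nbrs_def path3_plus_edge_def adj_def verts_def path3_adj_def)

lemma wl_path3_plus_edge:
  assumes "N \<ge> 5"
    and "init (path3_plus_edge N) = path3_plus_edge_labelling a b c d"
  shows "wl init (path3_plus_edge N) t v = path3_plus_edge_colour a b c d t v"
proof (induction t arbitrary: v)
  case 0
  then show ?case
    using assms(2) by (simp add: path3_plus_edge_colour_def path3_plus_edge_labelling_def)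
next
  case (Suc t)
  then show ?case
    using assms(1) by (simp add: nbrs_path3_plus_edge path3_plus_edge_colour_def)
qed

lemma cnt_edgeless:
  assumes "init (edgeless N) = (\<lambda>_. d)"
  shows "cnt init (edgeless N) t x = N * of_bool (x = isolated_colour d t)"
proof -
  have "wl init (edgeless N) t v = isolated_colour d t" for v
    using assms by (rule wl_edgeless)
  then show ?thesis
    by (simp add: cnt_def edgeless_def verts_def)
qed

lemma cnt_path3_plus_edge:
  assumes "N \<ge> 5"
    and "init (path3_plus_edge N) = path3_plus_edge_labelling a b c d"
  shows "cnt init (path3_plus_edge N) t x =
      of_bool (x = centre_colour a b t) + 2 * of_bool (x = leaf_colour a b t)
    + 2 * of_bool (x = edge_colour c t) + (N - 5) * of_bool (x = isolated_colour d t)"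
proof -
  let ?hit = "\<lambda>v. of_bool (path3_plus_edge_colour a b c d t v = x) :: nat"
  have "cnt init (path3_plus_edge N) t x = card {v\<in>{..<N}. path3_plus_edge_colour a b c d t v = x}"
    using wl_path3_plus_edge[where init = init, OF assms] by (simp add: cnt_def path3_plus_edge_def verts_def)
  also have "\<dots> = (\<Sum>v<N. ?hit v)"
    by (simp add: Int_def)
  also have "\<dots> = (\<Sum>v<5. ?hit v) + (\<Sum>v\<in>{5..<N}. ?hit v)"
    using assms(1) sum.atLeastLessThan_concat[of 0 5 N ?hit]
    by (simp add: lessThan_atLeast0 del: sum_of_bool_eq)
  also have "(\<Sum>v\<in>{5..<N}. ?hit v) = (N - 5) * of_bool (x = isolated_colour d t)"
    by (simp add: path3_plus_edge_colour_def eq_commute)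
  finally show ?thesis
    by (simp add: path3_plus_edge_colour_def eval_nat_numeral eq_commute)
qed

lemma colours_edgeless_path3_plus_edge:
  assumes "N \<ge> 5"
    and "init (edgeless N) = (\<lambda>_. d)"
    and "init (path3_plus_edge N) = path3_plus_edge_labelling a b c d"
  shows "colours init (edgeless N) (path3_plus_edge N) t =
    {centre_colour a b t, leaf_colour a b t, edge_colour c t, isolated_colour d t}"
proof -
  let ?colour = "path3_plus_edge_colour a b c d t"
  have edgeless: "wl init (edgeless N) t ` verts (edgeless N) = {isolated_colour d t}"
    using assms(1) wl_edgeless[where init = init, OF assms(2)]
    by (simp add: edgeless_def verts_def image_constant_conv lessThan_empty_iff)
  have path3_plus_edge: "wl init (path3_plus_edge N) t ` verts (path3_plus_edge N) = ?colour ` {..<N}"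
    using wl_path3_plus_edge[where init = init, OF assms(1,3)]
    by (simp add: path3_plus_edge_def verts_def)
  have "?colour ` {..<N} \<subseteq> {centre_colour a b t, leaf_colour a b t, edge_colour c t, isolated_colour d t}"
    by (auto simp: path3_plus_edge_colour_def)
  moreover have "{centre_colour a b t, leaf_colour a b t, edge_colour c t} \<subseteq> ?colour ` {..<N}"
  proof -
    have "{centre_colour a b t, leaf_colour a b t, edge_colour c t} = ?colour ` {0, 1, 3}"
      by (auto simp: path3_plus_edge_colour_def)
    also have "\<dots> \<subseteq> ?colour ` {..<N}"
      using assms(1) by (intro image_mono) auto
    finally show ?thesis .
  qed
  ultimately show ?thesis
    unfolding colours_def edgeless path3_plus_edge by blast
qed

lemma round_profile_edgeless_path3_plus_edge:
  assumes "N \<ge> 5"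
    and "init (edgeless N) = (\<lambda>_. d)"
    and "init (path3_plus_edge N) = path3_plus_edge_labelling a b c d"
  shows "round_profile init (edgeless N) (path3_plus_edge N) t =
    image_mset (\<lambda>x. (N * of_bool (x = isolated_colour d t),
        of_bool (x = centre_colour a b t) + 2 * of_bool (x = leaf_colour a b t)
      + 2 * of_bool (x = edge_colour c t) + (N - 5) * of_bool (x = isolated_colour d t)))
    (mset_set {centre_colour a b t, leaf_colour a b t, edge_colour c t, isolated_colour d t})"
  unfolding round_profile_def colours_edgeless_path3_plus_edge[OF assms]
  by (rule image_mset_cong)
    (simp only: cnt_edgeless[where init = init, OF assms(2)]
      cnt_path3_plus_edge[where init = init, OF assms(1,3)])

lemma edge_colour_ne_leaf_colour: "b \<noteq> c \<Longrightarrow> edge_colour c t \<noteq> leaf_colour a b t"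
  by (induction t) auto

lemma round_profile_plain:
  assumes "N \<ge> 5"
  shows "round_profile init_plain (edgeless N) (path3_plus_edge N) t =
    (if t = 0 then {#(N, N)#}
     else if t = 1 then {#(0, 1), (0, 4), (N, N - 5)#}
     else {#(0, 1), (0, 2), (0, 2), (N, N - 5)#})"
proof -
  have "init_plain (edgeless N) = (\<lambda>_. [])"
    "init_plain (path3_plus_edge N) = path3_plus_edge_labelling [] [] [] []"
    by (auto simp: init_plain_def path3_plus_edge_labelling_def)
  note profile = round_profile_edgeless_path3_plus_edge[OF assms this]
  consider "t = 0" | "t = 1" | s where "t = Suc (Suc s)"
    by (cases t; cases "t - 1") auto
  then show ?thesis
  proof cases
    case 1
    then show ?thesis
      using assms by (simp add: profile)
  next
    case 2
    then show ?thesis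
      by (simp add: profile)
  next
    case 3
    then show ?thesis
      by (simp add: profile) (simp add: numeral_2_eq_2)
  qed
qed

lemma round_profile_path3:
  assumes "N \<ge> 5"
  shows "round_profile (init_F [path3]) (edgeless N) (path3_plus_edge N) t =
    (if t = 0 then {#(0, 3), (N, N - 3)#} else {#(0, 1), (0, 2), (0, 2), (N, N - 5)#})"
proof -
  have "\<not> ell path3 (edgeless N) v" for v
    by (rule not_ell_edgeless[of _ 0 1]) (simp_all add: path3_def verts_def adj_def path3_adj_def)
  then have init_edgeless: "init_F [path3] (edgeless N) = (\<lambda>_. [False])"
    by (simp add: init_F_def fun_eq_iff)
  have init_path3_plus_edge:
    "init_F [path3] (path3_plus_edge N) = path3_plus_edge_labelling [True] [True] [False] [False]"
    using assms by (auto simp: init_F_def ell_path3_path3_plus_edge path3_plus_edge_labelling_def)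
  note profile = round_profile_edgeless_path3_plus_edge[OF assms init_edgeless init_path3_plus_edge]
  show ?thesis
  proof (cases t)
    case 0
    then show ?thesis
      using assms by (simp add: profile)
  next
    case (Suc s)
    have "edge_colour [False] s \<noteq> leaf_colour [True] [True] s"
      by (simp add: edge_colour_ne_leaf_colour)
    with Suc show ?thesis
      by (simp add: profile) (simp add: numeral_2_eq_2)
  qed
qed

lemma feature_sum_plain:
  assumes "N \<ge> 5" "T \<ge> 1"
  shows "feature_sum init_plain (edgeless N) (path3_plus_edge N) T f =
    f (real N) (real N) + (f 0 1 + f 0 4 + f (real N) (real N - 5))
    + (real T - 1) * (f 0 1 + 2 * f 0 2 + f (real N) (real N - 5))"
proof -
  have "feature_sum init_plain (edgeless N) (path3_plus_edge N) T f =
    (\<Sum>t\<le>T. if t = 0 then f (real N) (real N)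
      else if t = 1 then f 0 1 + f 0 4 + f (real N) (real N - 5)
      else f 0 1 + 2 * f 0 2 + f (real N) (real N - 5))"
    unfolding feature_sum_def sum_colours_eq_sum_round_profile[where f = "\<lambda>x y. f (real x) (real y)"]
    using assms(1) by (intro sum.cong) (simp_all add: round_profile_plain)
  then show ?thesis
    by (simp add: sum_atMost_if_zero_one[OF assms(2)])
qed

lemma feature_sum_path3:
  assumes "N \<ge> 5"
  shows "feature_sum (init_F [path3]) (edgeless N) (path3_plus_edge N) T f =
    f 0 3 + f (real N) (real N - 3) + real T * (f 0 1 + 2 * f 0 2 + f (real N) (real N - 5))"
proof -
  have "feature_sum (init_F [path3]) (edgeless N) (path3_plus_edge N) T f =
    (\<Sum>t\<le>T. if t = 0 then f 0 3 + f (real N) (real N - 3)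
      else f 0 1 + 2 * f 0 2 + f (real N) (real N - 5))"
    unfolding feature_sum_def sum_colours_eq_sum_round_profile[where f = "\<lambda>x y. f (real x) (real y)"]
    using assms by (intro sum.cong) (simp_all add: round_profile_path3)
  then show ?thesis
    by (simp add: sum_atMost_if_zero)
qed

lemma path3_plus_edge_polynomial_ineq:
  fixes N T :: real
  assumes "N \<ge> 11" "T \<ge> 1"
  shows "(N + T * (N - 5))\<^sup>2 * ((N - 3)\<^sup>2 + 9 + T * ((N - 5)\<^sup>2 + 9))
       < (N - 3 + T * (N - 5))\<^sup>2 * (N\<^sup>2 + T * (N - 5)\<^sup>2 + 9 * T + 8)"
proof -
  define x where "x = N - 11"
  define y where "y = T - 1"
  have "x \<ge> 0" "y \<ge> 0"
    using assms by (simp_all add: x_def y_def)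
  then have "0 < 2 + 975 * y + 396 * y\<^sup>2 + 292 * x + 548 * x * y + 186 * x * y\<^sup>2
      + 38 * x\<^sup>2 + 59 * x\<^sup>2 * y + 20 * x\<^sup>2 * y\<^sup>2"
    by (simp add: add_pos_nonneg)
  also have "\<dots> = (N - 3 + T * (N - 5))\<^sup>2 * (N\<^sup>2 + T * (N - 5)\<^sup>2 + 9 * T + 8)
      - (N + T * (N - 5))\<^sup>2 * ((N - 3)\<^sup>2 + 9 + T * ((N - 5)\<^sup>2 + 9))"
    by (simp add: x_def y_def algebra_simps power2_eq_square)
  finally show ?thesis
    by simp
qed

lemma wl_dist_path3_less_plain:
  assumes "N \<ge> 11" "T \<ge> 1"
  shows "wl_dist (init_F [path3]) (edgeless N) (path3_plus_edge N) T
       < wl_dist init_plain (edgeless N) (path3_plus_edge N) T"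
proof -
  let ?plain = "feature_sum init_plain (edgeless N) (path3_plus_edge N) T"
  let ?path3 = "feature_sum (init_F [path3]) (edgeless N) (path3_plus_edge N) T"
  define sqnorm_G where "sqnorm_G = (real T + 1) * (real N)\<^sup>2"
  define sqnorm_H_plain where "sqnorm_H_plain = (real N)\<^sup>2 + T * (real N - 5)\<^sup>2 + 9 * T + 8"
  define sqnorm_H_path3
    where "sqnorm_H_path3 = (real N - 3)\<^sup>2 + 9 + T * ((real N - 5)\<^sup>2 + 9)"
  have plain: "?plain (\<lambda>x y. x\<^sup>2) = sqnorm_G" "?plain (\<lambda>x y. y\<^sup>2) = sqnorm_H_plain"
    "?plain (\<lambda>x y. x * y) = real N * (real N + T * (real N - 5))"
    using assms by (simp_all add: feature_sum_plain sqnorm_G_def sqnorm_H_plain_def algebra_simps power2_eq_square)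
  have path3: "?path3 (\<lambda>x y. x\<^sup>2) = sqnorm_G" "?path3 (\<lambda>x y. y\<^sup>2) = sqnorm_H_path3"
    "?path3 (\<lambda>x y. x * y) = real N * (real N - 3 + T * (real N - 5))"
    using assms by (simp_all add: feature_sum_path3 sqnorm_G_def sqnorm_H_path3_def algebra_simps power2_eq_square)
  have pos: "sqnorm_G > 0" "sqnorm_H_plain > 0" "sqnorm_H_path3 > 0"
    using assms by (simp_all add: sqnorm_G_def sqnorm_H_plain_def sqnorm_H_path3_def add_pos_nonneg)
  have "(real N + T * (real N - 5))\<^sup>2 * sqnorm_H_path3
      < (real N - 3 + T * (real N - 5))\<^sup>2 * sqnorm_H_plain"
    using path3_plus_edge_polynomial_ineq[of "real N" "real T"] assms by (simp add: sqnorm_H_plain_def sqnorm_H_path3_def)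
  then have "real N * (real N + T * (real N - 5)) / sqrt (sqnorm_G * sqnorm_H_plain)
      < real N * (real N - 3 + T * (real N - 5)) / sqrt (sqnorm_G * sqnorm_H_path3)"
    using assms pos by (intro divide_sqrt_less_divide_sqrt) (simp_all add: power_mult_distrib)
  then show ?thesis
    using pos by (simp add: wl_dist_eq_cosine plain path3)
qed

theorem proposition14:
  fixes n :: nat
  assumes "n \<ge> 10"
  shows "\<exists>G H F. simple_graph G \<and> simple_graph H \<and> simple_graph F
            \<and> card (verts G) = 2 * n \<and> card (verts H) = 2 * n
            \<and> (\<forall>T::nat. T > 0 \<longrightarrow>
                 wl_dist (init_F [F]) G H T < wl_dist init_plain G H T)"
proof (intro exI conjI allI impI)
  show "simple_graph (edgeless (2 * n))" "simple_graph (path3_plus_edge (2 * n))" "simple_graph path3"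
    using assms by (simp_all add: simple_graph_edgeless simple_graph_path3_plus_edge simple_graph_path3)
  show "card (verts (edgeless (2 * n))) = 2 * n" "card (verts (path3_plus_edge (2 * n))) = 2 * n"
    by (simp_all add: edgeless_def path3_plus_edge_def verts_def)
  fix T :: nat
  assume "T > 0"
  with assms show "wl_dist (init_F [path3]) (edgeless (2 * n)) (path3_plus_edge (2 * n)) T
      < wl_dist init_plain (edgeless (2 * n)) (path3_plus_edge (2 * n)) T"
    by (intro wl_dist_path3_less_plain) simp_all
qed

end
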